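(* Let $G$ be a graph, $\alpha,k$ positive integers, and $S\subseteq V(G)$ with $|S|\ge\alpha+1$ and $|\delta_G(S,V(G)\setminus S)|\le 2\alpha^2+4k$. For $v\in S$ let $\gamma_S(v)=|\delta_G(\{v\},V(G)\setminus S)|$, and for $X\subseteq S$ let $\gamma_S(X)=\sum_{v\in X}\gamma_S(v)$. If $\mathrm{ecrw}_\alpha(G)\le k$, then there is a tree-cut decomposition $\mathcal{T}=(T,\{X_t\}_{t\in V(T)})$ of $G[S]$ such that: (a) $T$ is a star with center $t_c$ and at least one leaf; (b) $|X_{t_c}|\le\alpha$ and $\mathrm{cross}_{\mathcal T}(t_c)\le k$; (c) for each leaf $t$ of $T$, $\gamma_S(X_t)\le\alpha^2+2k$ and $|\delta_{G[S]}(X_t,X_{t_c})|\le\alpha^2+k$; (d) there is no leaf $q$ of $T$ with $X_q=S$. (That is, $(G[S],\alpha,k,\gamma_S)$ is a Yes-instance of \textsc{Constrained Star-Cut Decomposition}.)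
   Context: For disjoint vertex sets $S_1,S_2$ of a graph $G$, $\delta_G(S_1,S_2)$ denotes the set of edges with one endpoint in $S_1$ and the other in $S_2$. A tree-cut decomposition of a graph $G$ is a pair $\mathcal{T}=(T,\{X_t\}_{t\in V(T)})$ where $T$ is a tree and the bags $X_t\subseteq V(G)$ are pairwise disjoint (possibly empty) with $\bigcup_{t\in V(T)}X_t=V(G)$. For a node $t$ of $T$, let $T_1,\dots,T_m$ be the connected components of $T-t$ and $Z_i=\bigcup_{s\in V(T_i)}X_s$; $\mathrm{cross}_{\mathcal{T}}(t)$ is the number of edges of $G$ whose two endpoints lie in two distinct sets among $Z_1,\dots,Z_m$ (if $T$ has one node, $\mathrm{cross}_{\mathcal T}(t)=0$). The crossing number of $\mathcal{T}$ is $\max_{t}\mathrm{cross}_{\mathcal{T}}(t)$, and the thickness of $\mathcal{T}$ is $\max_t|X_t|$. $\mathrm{ecrw}_\alpha(G)$ is the minimum crossing number over tree-cut decompositions of $G$ of thickness at most $\alpha$. *)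

theory Defs
  imports Main
begin

definition graph :: "'a set \<Rightarrow> 'a set set \<Rightarrow> bool" where
  "graph V E \<longleftrightarrow> finite V \<and> (\<forall>e\<in>E. e \<subseteq> V \<and> card e = 2)"

definition delta :: "'a set set \<Rightarrow> 'a set \<Rightarrow> 'a set \<Rightarrow> 'a set set" where
  "delta E S1 S2 = {e \<in> E. \<exists>u\<in>S1. \<exists>v\<in>S2. e = {u, v}}"

definition induced_edges :: "'a set set \<Rightarrow> 'a set \<Rightarrow> 'a set set" where
  "induced_edges E S = {e \<in> E. e \<subseteq> S}"

definition reach :: "'b set \<Rightarrow> 'b set set \<Rightarrow> 'b \<Rightarrow> 'b \<Rightarrow> bool" where
  "reach N ET = (\<lambda>x y. x \<in> N \<and> y \<in> N \<and> {x, y} \<in> ET)\<^sup>*\<^sup>*"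

definition is_tree :: "'b set \<Rightarrow> 'b set set \<Rightarrow> bool" where
  "is_tree N ET \<longleftrightarrow> finite N \<and> N \<noteq> {} \<and> (\<forall>e\<in>ET. e \<subseteq> N \<and> card e = 2)
     \<and> (\<forall>a\<in>N. \<forall>b\<in>N. reach N ET a b) \<and> card ET = card N - 1"

definition tcd :: "'a set \<Rightarrow> 'a set set \<Rightarrow> 'b set \<Rightarrow> 'b set set \<Rightarrow> ('b \<Rightarrow> 'a set) \<Rightarrow> bool" where
  "tcd V E N ET X \<longleftrightarrow> is_tree N ET
     \<and> (\<forall>s\<in>N. \<forall>s'\<in>N. s \<noteq> s' \<longrightarrow> X s \<inter> X s' = {})
     \<and> \<Union> (X ` N) = V"

definition cross :: "'a set set \<Rightarrow> 'b set \<Rightarrow> 'b set set \<Rightarrow> ('b \<Rightarrow> 'a set) \<Rightarrow> 'b \<Rightarrow> nat" where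
  "cross E N ET X t = card {e \<in> E. \<exists>u v s s'. e = {u, v} \<and> s \<in> N - {t} \<and> s' \<in> N - {t}
       \<and> u \<in> X s \<and> v \<in> X s' \<and> \<not> reach (N - {t}) ET s s'}"

definition crossing_number :: "'a set set \<Rightarrow> 'b set \<Rightarrow> 'b set set \<Rightarrow> ('b \<Rightarrow> 'a set) \<Rightarrow> nat" where
  "crossing_number E N ET X = Max ((cross E N ET X) ` N)"

definition thickness :: "'b set \<Rightarrow> ('b \<Rightarrow> 'a set) \<Rightarrow> nat" where
  "thickness N X = Max ((\<lambda>t. card (X t)) ` N)"

text \<open>ecrw_alpha(G): minimum crossing number over tree-cut decompositions of thickness
  at most alpha (tree nodes labelled by naturals; G is finite so this is no restriction).\<close>
definition ecrw :: "nat \<Rightarrow> 'a set \<Rightarrow> 'a set set \<Rightarrow> nat" where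
  "ecrw \<alpha> V E = Inf {c. \<exists>(N :: nat set) ET X. tcd V E N ET X \<and> thickness N X \<le> \<alpha>
                        \<and> crossing_number E N ET X = c}"

definition gamma :: "'a set \<Rightarrow> 'a set set \<Rightarrow> 'a set \<Rightarrow> 'a \<Rightarrow> nat" where
  "gamma V E S v = card (delta E {v} (V - S))"

definition gamma_set :: "'a set \<Rightarrow> 'a set set \<Rightarrow> 'a set \<Rightarrow> 'a set \<Rightarrow> nat" where
  "gamma_set V E S Y = (\<Sum>v\<in>Y. gamma V E S v)"

definition is_star :: "'b set \<Rightarrow> 'b set set \<Rightarrow> 'b \<Rightarrow> 'b set \<Rightarrow> bool" where
  "is_star N ET tc L \<longleftrightarrow> L \<noteq> {} \<and> tc \<notin> L \<and> N = insert tc L \<and> ET = {{tc, l} | l. l \<in> L}"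

end

theory Submission
  imports Defs
begin

text \<open>Take a tree-cut decomposition (T, X) of G of thickness at most \<alpha> and crossing number at
  most k. Call a vertex set heavy if its \<gamma>-weight on S exceeds \<alpha>^2 + 2k or it contains S.
  As \<gamma>(S) \<le> 2\<alpha>^2 + 4k and S is nonempty, no two disjoint sets are heavy, so a node t of T
  minimising the number of heavy branches (unions of the bags of a component of T - t) has none.
  Contracting every component of T - t into a leaf and intersecting all bags with S yields the
  star: the centre only loses vertices and crossing edges, and an edge between a leaf and the
  centre either joins the centre to the bag of the neighbour n of t in that component (at most
  \<alpha>^2 such edges) or is counted in the crossing number at n (at most k).\<close>

lemma reach_refl: "reach M F a a"
  unfolding reach_def by simp

lemma reach_step: "reach M F a b \<Longrightarrow> b \<in> M \<Longrightarrow> c \<in> M \<Longrightarrow> {b, c} \<in> F \<Longrightarrow> reach M F a c"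
  unfolding reach_def by (simp add: rtranclp.rtrancl_into_rtrancl)

lemma reach_edge: "b \<in> M \<Longrightarrow> c \<in> M \<Longrightarrow> {b, c} \<in> F \<Longrightarrow> reach M F b c"
  using reach_step[OF reach_refl] .

lemma reach_trans: "reach M F a b \<Longrightarrow> reach M F b c \<Longrightarrow> reach M F a c"
  unfolding reach_def by (rule rtranclp_trans)

lemma reach_sym: "reach M F a b \<Longrightarrow> reach M F b a"
  unfolding reach_def
proof (induction rule: rtranclp.induct)
  case (rtrancl_into_rtrancl a b c)
  then have "c \<in> M" "b \<in> M" "{c, b} \<in> F" by (auto simp: insert_commute)
  then show ?case using rtrancl_into_rtrancl.IH by (simp add: converse_rtranclp_into_rtranclp)
qed (simp add: reach_refl)

lemma reach_mono:
  assumes "\<And>x y. x \<in> A \<Longrightarrow> y \<in> A \<Longrightarrow> {x, y} \<in> F \<Longrightarrow> x \<in> B \<and> y \<in> B \<and> {x, y} \<in> G"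
    and "reach A F a b"
  shows "reach B G a b"
  using assms(2) unfolding reach_def
  by (rule rtranclp_mono[THEN predicate2D, rotated]) (use assms(1) in blast)

lemma reach_mem: "reach M F a b \<Longrightarrow> a \<in> M \<Longrightarrow> b \<in> M"
  unfolding reach_def by (induction rule: rtranclp_induct) auto

lemma reach_induct [consumes 1, case_names base step]:
  assumes "reach M F a b" "P a"
    "\<And>y z. reach M F a y \<Longrightarrow> y \<in> M \<Longrightarrow> z \<in> M \<Longrightarrow> {y, z} \<in> F \<Longrightarrow> P y \<Longrightarrow> P z"
  shows "P b"
  using assms(1) unfolding reach_def
proof (induction rule: rtranclp_induct)
  case (step y z)
  then show ?case using assms(3)[of y z] by (simp add: reach_def)
qed (rule assms(2))

lemma reach_exit:
  assumes "reach M F a b" "a \<in> M - D"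
  shows "reach (M - D) F a b \<or> (\<exists>m d. reach (M - D) F a m \<and> m \<in> M - D \<and> d \<in> D \<and> {m, d} \<in> F)"
  using assms(1)
proof (induction rule: reach_induct)
  case (step y z)
  show ?case
  proof (cases "reach (M - D) F a y")
    case True
    then have "y \<in> M - D" using reach_mem assms(2) by fast
    then show ?thesis using True step.hyps reach_step[of "M - D" F a y z] by blast
  next
    case False
    then show ?thesis using step.IH by blast
  qed
qed (simp add: reach_refl)

lemma reach_Diff_edge:
  assumes "reach M (F - {{t, n}}) t n" "reach M F a b"
  shows "reach M (F - {{t, n}}) a b"
  using assms(2)
proof (induction rule: reach_induct)
  case (step y z)
  show ?case
  proof (cases "{y, z} = {t, n}")
    case True
    then have "(y = t \<and> z = n) \<or> (y = n \<and> z = t)" by (auto simp: doubleton_eq_iff)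
    then show ?thesis
    proof (elim disjE conjE)
      assume "y = t" "z = n"
      then show ?thesis using reach_trans[OF step.IH] assms(1) by simp
    next
      assume "y = n" "z = t"
      then show ?thesis using reach_trans[OF step.IH] reach_sym[OF assms(1)] by simp
    qed
  next
    case False
    then have "{y, z} \<in> F - {{t, n}}" using step.hyps by simp
    then show ?thesis using reach_step[OF step.IH] step.hyps by simp
  qed
qed (simp add: reach_refl)

lemma card_le_Suc_card_edges_if_connected:
  assumes fin: "finite N" and r: "r \<in> N" and conn: "\<forall>s\<in>N. reach N F s r" and finF: "finite F"
  shows "card N \<le> card F + 1"
proof -
  define P where "P = (\<lambda>x y. x \<in> N \<and> y \<in> N \<and> {x, y} \<in> F)"
  define d where "d = (\<lambda>s. LEAST m. (P ^^ m) s r)"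
  have ex: "\<exists>p. P s p \<and> d p < d s" if s: "s \<in> N - {r}" for s
  proof -
    have "P\<^sup>*\<^sup>* s r" using conn s unfolding reach_def P_def by auto
    then obtain m where "(P ^^ m) s r" by (auto simp: rtranclp_power)
    then have dm: "(P ^^ d s) s r" unfolding d_def by (rule LeastI)
    moreover have "d s \<noteq> 0" using dm s by (intro notI) simp
    then obtain m' where m': "d s = Suc m'" using not0_implies_Suc by blast
    ultimately obtain p where p: "P s p" "(P ^^ m') p r" using relpowp_Suc_D2 by metis
    have "d p \<le> m'" unfolding d_def using p(2) by (rule Least_le)
    then show ?thesis using p m' by auto
  qed
  \<comment> \<open>each node other than r is injectively assigned the edge to a neighbour closer to r\<close>
  define p where "p = (\<lambda>s. SOME p. P s p \<and> d p < d s)"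
  have pp: "P s (p s) \<and> d (p s) < d s" if "s \<in> N - {r}" for s
    unfolding p_def using someI_ex[OF ex[OF that]] .
  have inj: "inj_on (\<lambda>s. {s, p s}) (N - {r})"
  proof (rule inj_onI)
    fix s s' assume a: "s \<in> N - {r}" "s' \<in> N - {r}" "{s, p s} = {s', p s'}"
    show "s = s'"
    proof (rule ccontr)
      assume "s \<noteq> s'"
      with a(3) have "p s = s'" "s = p s'" unfolding doubleton_eq_iff by blast+
      then show False using pp[OF a(1)] pp[OF a(2)] by simp
    qed
  qed
  have "(\<lambda>s. {s, p s}) ` (N - {r}) \<subseteq> F" using pp unfolding P_def by auto
  then have "card (N - {r}) \<le> card F"
    using card_inj_on_le[OF inj _ finF] by blast
  then show ?thesis using r fin by auto
qed

lemma tree_finite_edges: "is_tree N ET \<Longrightarrow> finite ET"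
  unfolding is_tree_def by (meson Pow_iff finite_Pow_iff rev_finite_subset subsetI)

lemma tree_edge_nodes: "is_tree N ET \<Longrightarrow> {t, n} \<in> ET \<Longrightarrow> t \<in> N \<and> n \<in> N \<and> t \<noteq> n"
  unfolding is_tree_def by (auto dest!: bspec[where x="{t, n}"] simp: card_2_iff)

text \<open>Otherwise T stays connected after deleting the edge {t, n}, with only |N| - 2 edges left.\<close>
lemma tree_edge_separates:
  assumes tr: "is_tree N ET" and e: "{t, n} \<in> ET"
    and r1: "reach (N - {n}) ET t x" and r2: "reach (N - {t}) ET n x"
  shows False
proof -
  have tn: "t \<in> N" "n \<in> N" "t \<noteq> n" using tree_edge_nodes[OF tr e] by auto
  define F where "F = ET - {{t, n}}"
  have "reach N F t x" by (rule reach_mono[OF _ r1]) (auto simp: F_def doubleton_eq_iff)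
  moreover have "reach N F n x" by (rule reach_mono[OF _ r2]) (auto simp: F_def doubleton_eq_iff)
  ultimately have "reach N F t n" by (rule reach_trans[OF _ reach_sym])
  then have conn: "\<forall>s\<in>N. reach N F s t"
    using tr tn reach_Diff_edge[of N ET t n] unfolding is_tree_def F_def by blast
  have finE: "finite ET" using tree_finite_edges[OF tr] .
  have "card N \<le> card F + 1"
    using card_le_Suc_card_edges_if_connected[OF _ tn(1) conn] tr finE
    unfolding is_tree_def F_def by simp
  moreover have "card F = card ET - 1" using finE e unfolding F_def by simp
  moreover have "card ET = card N - 1" using tr unfolding is_tree_def by simp
  moreover have "card {t, n} \<le> card N" using tn tr unfolding is_tree_def by (intro card_mono) auto
  ultimately show False using tn by simp
qed

lemma tree_reach_neighbour:
  assumes tr: "is_tree N ET" and t: "t \<in> N" and s: "s \<in> N - {t}"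
  obtains n where "{t, n} \<in> ET" "reach (N - {t}) ET s n"
proof -
  have "reach N ET s t" using tr s t unfolding is_tree_def by blast
  from reach_exit[OF this s] show ?thesis
  proof (elim disjE exE conjE)
    assume "reach (N - {t}) ET s t"
    then show ?thesis using reach_mem[of "N - {t}" ET s t] s by simp
  next
    fix m d assume m: "reach (N - {t}) ET s m" and "d \<in> {t}" "{m, d} \<in> ET"
    then have "{t, m} \<in> ET" by (simp add: insert_commute)
    then show ?thesis using m by (rule that)
  qed
qed

lemma tree_reach_avoiding_swap:
  assumes tr: "is_tree N ET" and tn: "t \<in> N" "n \<in> N" "t \<noteq> n"
    and y: "y \<in> N - {n}" and nr: "\<not> reach (N - {n}) ET y t"
  shows "reach (N - {t}) ET y n"
proof -
  have yt: "y \<in> N - {t, n}" using nr y reach_refl by fastforce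
  have "reach N ET y n" using tr y tn unfolding is_tree_def by blast
  from reach_exit[OF this yt] show ?thesis
  proof (elim disjE exE conjE)
    assume "reach (N - {t, n}) ET y n"
    with yt show ?thesis using reach_mem by fast
  next
    fix m d assume md: "reach (N - {t, n}) ET y m" "m \<in> N - {t, n}" "d \<in> {t, n}" "{m, d} \<in> ET"
    have "reach (N - {n}) ET y m" by (rule reach_mono[OF _ md(1)]) blast
    moreover have "reach (N - {t}) ET y m" by (rule reach_mono[OF _ md(1)]) blast
    ultimately show ?thesis
      using md tn nr reach_step[of "N - {n}" ET y m t] reach_step[of "N - {t}" ET y m n] by auto
  qed
qed

lemma tree_neighbour_unique:
  assumes tr: "is_tree N ET" and e: "{t, n} \<in> ET" "{t, n'} \<in> ET"
    and r: "reach (N - {t}) ET n n'"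
  shows "n = n'"
proof (rule ccontr)
  assume "n \<noteq> n'"
  moreover have "t \<in> N" "n' \<in> N" "t \<noteq> n'" "t \<noteq> n"
    using tree_edge_nodes[OF tr e(1)] tree_edge_nodes[OF tr e(2)] by auto
  ultimately have "reach (N - {n}) ET t n'" using e(2) by (intro reach_edge) auto
  then show False using tree_edge_separates[OF tr e(1) _ r] by simp
qed

definition neighbours :: "'b set set \<Rightarrow> 'b \<Rightarrow> 'b set" where
  "neighbours ET t = {n. {t, n} \<in> ET}"

definition branch :: "'b set \<Rightarrow> 'b set set \<Rightarrow> ('b \<Rightarrow> 'a set) \<Rightarrow> 'b \<Rightarrow> 'b \<Rightarrow> 'a set" where
  "branch N ET X t s = \<Union> (X ` {s' \<in> N - {t}. reach (N - {t}) ET s s'})"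

text \<open>Contracting every component of T - t to a single leaf, labelled by the unique neighbour
  of t it contains, and restricting all bags to S.\<close>
definition contract_bags :: "'b set \<Rightarrow> 'b set set \<Rightarrow> ('b \<Rightarrow> 'a set) \<Rightarrow> 'a set \<Rightarrow> 'b \<Rightarrow> 'b \<Rightarrow> 'a set"
  where "contract_bags N ET X S t n = (if n = t then X t else branch N ET X t n) \<inter> S"

definition cross_edges :: "'a set set \<Rightarrow> 'b set \<Rightarrow> 'b set set \<Rightarrow> ('b \<Rightarrow> 'a set) \<Rightarrow> 'b \<Rightarrow> 'a set set"
  where "cross_edges E N ET X t = {e \<in> E. \<exists>u v s s'. e = {u, v} \<and> s \<in> N - {t} \<and> s' \<in> N - {t}
           \<and> u \<in> X s \<and> v \<in> X s' \<and> \<not> reach (N - {t}) ET s s'}"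

lemma cross_eq_card_cross_edges: "cross E N ET X t = card (cross_edges E N ET X t)"
  unfolding cross_def cross_edges_def ..

lemma finite_cross_edges: "finite E \<Longrightarrow> finite (cross_edges E N ET X t)"
  unfolding cross_edges_def by simp

lemma mem_branch_iff: "x \<in> branch N ET X t s \<longleftrightarrow> (\<exists>y \<in> N - {t}. reach (N - {t}) ET s y \<and> x \<in> X y)"
  unfolding branch_def by blast

lemma branch_cong:
  assumes "reach (N - {t}) ET s s'"
  shows "branch N ET X t s = branch N ET X t s'"
proof -
  have "reach (N - {t}) ET s y \<longleftrightarrow> reach (N - {t}) ET s' y" for y
    using reach_trans[OF assms, of y] reach_trans[OF reach_sym[OF assms], of y] by blast
  then show ?thesis unfolding branch_def by simp
qed

lemma neighbours_subset: "is_tree N ET \<Longrightarrow> neighbours ET t \<subseteq> N - {t}"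
  unfolding neighbours_def using tree_edge_nodes by fastforce

lemma neighbours_nonempty:
  assumes "is_tree N ET" "t \<in> N" "N \<noteq> {t}"
  shows "neighbours ET t \<noteq> {}"
proof -
  obtain s where "s \<in> N - {t}" using assms(2,3) by blast
  then obtain n where "{t, n} \<in> ET" using tree_reach_neighbour[OF assms(1,2)] by blast
  then show ?thesis unfolding neighbours_def by blast
qed

lemma star_tree:
  assumes "tc \<notin> L" "finite L"
  shows "is_tree (insert tc L) {{tc, l} | l. l \<in> L}"
proof -
  let ?ET = "{{tc, l} | l. l \<in> L}"
  have to_centre: "reach (insert tc L) ?ET a tc" if "a \<in> insert tc L" for a
  proof (cases "a = tc")
    case True
    then show ?thesis by (simp add: reach_refl)
  next
    case False
    then have "a \<in> L" using that by simp
    then have "{a, tc} \<in> ?ET" by (blast intro: insert_commute)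
    then show ?thesis using that by (intro reach_edge) auto
  qed
  have "inj_on (\<lambda>l. {tc, l}) L" using assms(1) by (auto simp: inj_on_def doubleton_eq_iff)
  moreover have "?ET = (\<lambda>l. {tc, l}) ` L" by blast
  ultimately have "card ?ET = card L" by (simp add: card_image)
  moreover have "\<forall>e\<in>?ET. e \<subseteq> insert tc L \<and> card e = 2" using assms(1) by (auto simp: card_2_iff)
  moreover have "\<forall>a\<in>insert tc L. \<forall>b\<in>insert tc L. reach (insert tc L) ?ET a b"
    using reach_trans[OF to_centre reach_sym[OF to_centre]] by blast
  ultimately show ?thesis unfolding is_tree_def using assms by simp
qed

lemma card_delta_le: "finite A \<Longrightarrow> finite B \<Longrightarrow> card (delta E A B) \<le> card A * card B"
proof -
  assume fin: "finite A" "finite B"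
  have "delta E A B \<subseteq> (\<lambda>(u, v). {u, v}) ` (A \<times> B)" unfolding delta_def by auto
  then have "card (delta E A B) \<le> card ((\<lambda>(u, v). {u, v}) ` (A \<times> B))"
    using fin by (intro card_mono) auto
  also have "\<dots> \<le> card (A \<times> B)" using fin by (intro card_image_le) auto
  finally show ?thesis by (simp add: card_cartesian_product)
qed

lemma graph_finite_edges: "graph V E \<Longrightarrow> finite E"
  unfolding graph_def by (meson Pow_iff finite_Pow_iff rev_finite_subset subsetI)

lemma gamma_set_mono: "finite B \<Longrightarrow> A \<subseteq> B \<Longrightarrow> gamma_set V E S A \<le> gamma_set V E S B"
  unfolding gamma_set_def by (rule sum_mono2) auto

lemma gamma_set_le_card_delta:
  assumes g: "graph V E" and S: "S \<subseteq> V"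
  shows "gamma_set V E S S \<le> card (delta E S (V - S))"
proof -
  have finE: "finite E" using graph_finite_edges[OF g] .
  have finS: "finite S" using g S finite_subset unfolding graph_def by blast
  have "gamma_set V E S S = card (\<Union>v\<in>S. delta E {v} (V - S))"
    unfolding gamma_set_def gamma_def
  proof (rule card_UN_disjoint[symmetric])
    show "\<forall>v\<in>S. finite (delta E {v} (V - S))"
      using finE unfolding delta_def by simp
    show "\<forall>v\<in>S. \<forall>w\<in>S. v \<noteq> w \<longrightarrow> delta E {v} (V - S) \<inter> delta E {w} (V - S) = {}"
      unfolding delta_def doubleton_eq_iff by blast
  qed (rule finS)
  also have "\<dots> \<le> card (delta E S (V - S))"
    using finE by (intro card_mono) (auto simp: delta_def)
  finally show ?thesis .
qed

text \<open>Sets whose trace on S cannot be the bag of a leaf, by (c) or (d).\<close>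
definition heavy :: "'a set \<Rightarrow> 'a set set \<Rightarrow> 'a set \<Rightarrow> nat \<Rightarrow> 'a set \<Rightarrow> bool" where
  "heavy V E S b A \<longleftrightarrow> b < gamma_set V E S (A \<inter> S) \<or> S \<subseteq> A"

lemma heavy_mono:
  assumes "finite S" "A \<subseteq> B" "heavy V E S b A"
  shows "heavy V E S b B"
proof -
  have "gamma_set V E S (A \<inter> S) \<le> gamma_set V E S (B \<inter> S)"
    using assms(1,2) by (intro gamma_set_mono) auto
  then show ?thesis using assms(2,3) unfolding heavy_def by auto
qed

lemma not_heavy_Int:
  "\<not> heavy V E S b A \<Longrightarrow> gamma_set V E S (A \<inter> S) \<le> b \<and> A \<inter> S \<noteq> S"
  unfolding heavy_def by auto

lemma heavy_disjoint:
  assumes "graph V E" "S \<subseteq> V" "S \<noteq> {}" "card (delta E S (V - S)) \<le> 2 * b"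
    and "A \<inter> B = {}" "heavy V E S b A" "heavy V E S b B"
  shows False
proof -
  have finS: "finite S" using assms(1,2) finite_subset unfolding graph_def by blast
  have "gamma_set V E S (A \<inter> S) + gamma_set V E S (B \<inter> S) = gamma_set V E S ((A \<union> B) \<inter> S)"
    unfolding gamma_set_def using finS assms(5)
    by (subst sum.union_disjoint[symmetric]) (auto simp: Int_Un_distrib2)
  also have "\<dots> \<le> gamma_set V E S S" using finS by (intro gamma_set_mono) auto
  also have "\<dots> \<le> 2 * b" using gamma_set_le_card_delta[OF assms(1,2)] assms(4) by simp
  finally have sum: "gamma_set V E S (A \<inter> S) + gamma_set V E S (B \<inter> S) \<le> 2 * b" .
  consider "S \<subseteq> A" | "S \<subseteq> B" | "\<not> S \<subseteq> A" "\<not> S \<subseteq> B" by blast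
  then show False
  proof cases
    case 1
    then have "B \<inter> S = {}" "\<not> S \<subseteq> B" using assms(3,5) by blast+
    then show False using assms(7) unfolding heavy_def gamma_set_def by simp
  next
    case 2
    then have "A \<inter> S = {}" "\<not> S \<subseteq> A" using assms(3,5) by blast+
    then show False using assms(6) unfolding heavy_def gamma_set_def by simp
  next
    case 3
    then show False using sum assms(6,7) unfolding heavy_def by simp
  qed
qed

locale tree_cut_decomposition =
  fixes V :: "'a set" and E :: "'a set set" and N :: "'b set" and ET :: "'b set set"
    and X :: "'b \<Rightarrow> 'a set"
  assumes tcd: "tcd V E N ET X"
begin

lemma tree: "is_tree N ET"
  using tcd unfolding tcd_def by simp

lemma bags_disjoint: "s \<in> N \<Longrightarrow> s' \<in> N \<Longrightarrow> s \<noteq> s' \<Longrightarrow> X s \<inter> X s' = {}"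
  using tcd unfolding tcd_def by blast

lemma bags_cover: "\<Union> (X ` N) = V"
  using tcd unfolding tcd_def by simp

lemma finite_bag: "finite V \<Longrightarrow> t \<in> N \<Longrightarrow> finite (X t)"
  using bags_cover by (metis UN_upper finite_subset)

lemma branch_edge_disjoint:
  assumes "{t, n} \<in> ET"
  shows "branch N ET X n t \<inter> branch N ET X t n = {}"
proof (rule ccontr)
  assume "branch N ET X n t \<inter> branch N ET X t n \<noteq> {}"
  then obtain x y1 y2 where y: "y1 \<in> N - {n}" "reach (N - {n}) ET t y1" "x \<in> X y1"
    "y2 \<in> N - {t}" "reach (N - {t}) ET n y2" "x \<in> X y2"
    unfolding branch_def by blast
  then have "y1 = y2" using bags_disjoint by blast
  then show False using tree_edge_separates[OF tree assms y(2)] y(5) by simp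
qed

lemma branch_subset_across_edge:
  assumes e: "{t, n} \<in> ET" and s: "s \<in> N - {n}" and nr: "\<not> reach (N - {n}) ET s t"
  shows "s \<in> N - {t}" and "branch N ET X n s \<subseteq> branch N ET X t s"
proof -
  have tn: "t \<in> N" "n \<in> N" "t \<noteq> n" using tree_edge_nodes[OF tree e] by auto
  show s': "s \<in> N - {t}" using s nr reach_refl[of "N - {n}" ET s] by auto
  have sn: "reach (N - {t}) ET s n" using tree_reach_avoiding_swap[OF tree tn s nr] .
  show "branch N ET X n s \<subseteq> branch N ET X t s"
  proof
    fix x assume "x \<in> branch N ET X n s"
    then obtain y where y: "y \<in> N - {n}" "reach (N - {n}) ET s y" "x \<in> X y"
      unfolding mem_branch_iff by blast
    have "\<not> reach (N - {n}) ET y t" using nr reach_trans[OF y(2)] by blast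
    then have "reach (N - {t}) ET y n" using tree_reach_avoiding_swap[OF tree tn y(1)] by simp
    then have sy: "reach (N - {t}) ET s y" using reach_trans[OF sn reach_sym] by blast
    moreover have "y \<in> N - {t}" using reach_mem[OF sy s'] .
    ultimately show "x \<in> branch N ET X t s" unfolding mem_branch_iff using y(3) by blast
  qed
qed

text \<open>Choose t with the fewest heavy branches. If the branch of T - t at its neighbour n were
  heavy, then every heavy branch of T - n misses t (the branch of T - n containing t is disjoint
  from the heavy one at n) and hence lies inside a heavy branch of T - t; as n itself is not
  counted at n, n would have fewer heavy branches than t.\<close>
lemma ex_node_without_heavy_branch:
  fixes H :: "'a set \<Rightarrow> bool"
  assumes disjoint: "\<And>A B. A \<inter> B = {} \<Longrightarrow> H A \<Longrightarrow> H B \<Longrightarrow> False"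
    and mono: "\<And>A B. A \<subseteq> B \<Longrightarrow> H A \<Longrightarrow> H B"
  obtains t where "t \<in> N" "\<And>s. s \<in> N - {t} \<Longrightarrow> \<not> H (branch N ET X t s)"
proof -
  define heavy_at where "heavy_at = (\<lambda>t. {s \<in> N - {t}. H (branch N ET X t s)})"
  have finN: "finite N" and "N \<noteq> {}" using tree unfolding is_tree_def by auto
  then obtain t0 where "t0 \<in> N" by blast
  then obtain t where t: "t \<in> N"
    and tmin: "\<And>u. u \<in> N \<Longrightarrow> card (heavy_at t) \<le> card (heavy_at u)"
    using ex_has_least_nat[of "\<lambda>t. t \<in> N" t0 "\<lambda>t. card (heavy_at t)"] by blast
  have "heavy_at t = {}"
  proof (rule ccontr)
    assume "heavy_at t \<noteq> {}"
    then obtain s where s: "s \<in> N - {t}" "H (branch N ET X t s)" unfolding heavy_at_def by blast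
    obtain n where e: "{t, n} \<in> ET" and sn: "reach (N - {t}) ET s n"
      using tree_reach_neighbour[OF tree t s(1)] by blast
    have n: "n \<in> N - {t}" using reach_mem[OF sn s(1)] .
    have Hn: "H (branch N ET X t n)" using s(2) branch_cong[OF sn, of X] by simp
    have "heavy_at n \<subseteq> heavy_at t - {n}"
    proof
      fix s' assume "s' \<in> heavy_at n"
      then have s': "s' \<in> N - {n}" "H (branch N ET X n s')" unfolding heavy_at_def by auto
      have nr: "\<not> reach (N - {n}) ET s' t"
      proof
        assume "reach (N - {n}) ET s' t"
        then have "H (branch N ET X n t)" using s'(2) branch_cong[of N n ET s' t X] by simp
        then show False using disjoint[OF branch_edge_disjoint[OF e] _ Hn] by simp
      qed
      have "s' \<in> N - {t}" "H (branch N ET X t s')"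
        using branch_subset_across_edge[OF e s'(1) nr] mono[OF _ s'(2)] by auto
      then show "s' \<in> heavy_at t - {n}" using s'(1) unfolding heavy_at_def by blast
    qed
    moreover have "n \<in> heavy_at t" using n Hn unfolding heavy_at_def by simp
    ultimately have "heavy_at n \<subset> heavy_at t" by blast
    then have "card (heavy_at n) < card (heavy_at t)"
      using finN unfolding heavy_at_def by (intro psubset_card_mono) auto
    then show False using tmin[of n] n by simp
  qed
  then show ?thesis using that t unfolding heavy_at_def by blast
qed

lemma contract_bags_disjoint:
  assumes tc: "tc \<in> N" and s: "s \<in> insert tc (neighbours ET tc)" and s': "s' \<in> insert tc (neighbours ET tc)"
    and "s \<noteq> s'"
  shows "contract_bags N ET X S tc s \<inter> contract_bags N ET X S tc s' = {}"
proof -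
  have centre: "X tc \<inter> branch N ET X tc n = {}" for n
    using bags_disjoint tc unfolding branch_def by blast
  have leaves: "branch N ET X tc n \<inter> branch N ET X tc n' = {}"
    if "n \<in> neighbours ET tc" "n' \<in> neighbours ET tc" "n \<noteq> n'" for n n'
  proof (rule ccontr)
    assume "branch N ET X tc n \<inter> branch N ET X tc n' \<noteq> {}"
    then obtain x y y' where y: "y \<in> N - {tc}" "reach (N - {tc}) ET n y" "x \<in> X y"
      and y': "y' \<in> N - {tc}" "reach (N - {tc}) ET n' y'" "x \<in> X y'"
      unfolding branch_def by blast
    have "y' = y" using bags_disjoint y y' by blast
    then have "reach (N - {tc}) ET n n'" using reach_trans[OF y(2)] reach_sym[OF y'(2)] by simp
    then show False using tree_neighbour_unique[OF tree] that unfolding neighbours_def by blast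
  qed
  show ?thesis
    using assms(2-4) centre[of s] centre[of s'] leaves[of s s'] unfolding contract_bags_def by auto
qed

lemma contract_bags_cover:
  assumes tc: "tc \<in> N" and "S \<subseteq> V"
  shows "\<Union> (contract_bags N ET X S tc ` insert tc (neighbours ET tc)) = S"
proof
  show "\<Union> (contract_bags N ET X S tc ` insert tc (neighbours ET tc)) \<subseteq> S"
    unfolding contract_bags_def by blast
next
  show "S \<subseteq> \<Union> (contract_bags N ET X S tc ` insert tc (neighbours ET tc))"
  proof
    fix v assume v: "v \<in> S"
    then obtain y where y: "y \<in> N" "v \<in> X y" using assms(2) bags_cover by blast
    show "v \<in> \<Union> (contract_bags N ET X S tc ` insert tc (neighbours ET tc))"
    proof (cases "y = tc")
      case True
      then show ?thesis using v y unfolding contract_bags_def by auto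
    next
      case False
      then obtain n where e: "{tc, n} \<in> ET" and yn: "reach (N - {tc}) ET y n"
        using tree_reach_neighbour[OF tree tc] y(1) by blast
      have "n \<noteq> tc" using tree_edge_nodes[OF tree e] by auto
      moreover have "v \<in> branch N ET X tc n"
        unfolding mem_branch_iff using reach_sym[OF yn] y False by blast
      ultimately have "v \<in> contract_bags N ET X S tc n" using v unfolding contract_bags_def by simp
      moreover have "n \<in> neighbours ET tc" using e unfolding neighbours_def by simp
      ultimately show ?thesis by blast
    qed
  qed
qed

lemma tcd_contract:
  assumes "tc \<in> N" "S \<subseteq> V"
  shows "tcd S E' (insert tc (neighbours ET tc)) {{tc, l} | l. l \<in> neighbours ET tc}
           (contract_bags N ET X S tc)"
proof -
  have "neighbours ET tc \<subseteq> N - {tc}" by (rule neighbours_subset[OF tree])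
  moreover have "finite N" using tree unfolding is_tree_def by simp
  ultimately have "is_tree (insert tc (neighbours ET tc)) {{tc, l} | l. l \<in> neighbours ET tc}"
    by (intro star_tree) (auto intro: finite_subset)
  then show ?thesis
    unfolding tcd_def using contract_bags_disjoint[OF assms(1)] contract_bags_cover[OF assms]
    by blast
qed

lemma cross_edges_contract_subset:
  assumes "E' \<subseteq> E"
  shows "cross_edges E' (insert tc (neighbours ET tc)) {{tc, l} | l. l \<in> neighbours ET tc}
           (contract_bags N ET X S tc) tc \<subseteq> cross_edges E N ET X tc"
proof
  let ?L = "neighbours ET tc"
  fix e assume "e \<in> cross_edges E' (insert tc ?L) {{tc, l} | l. l \<in> ?L} (contract_bags N ET X S tc) tc"
  then obtain u v s s' where e: "e \<in> E'" "e = {u, v}" and s: "s \<in> ?L - {tc}" "s' \<in> ?L - {tc}"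
    and uv: "u \<in> contract_bags N ET X S tc s" "v \<in> contract_bags N ET X S tc s'"
    and nr: "\<not> reach (insert tc ?L - {tc}) {{tc, l} | l. l \<in> ?L} s s'"
    unfolding cross_edges_def by blast
  have "s \<noteq> s'" using nr reach_refl by metis
  obtain y where y: "y \<in> N - {tc}" "reach (N - {tc}) ET s y" "u \<in> X y"
    using uv(1) s(1) by (auto simp: contract_bags_def mem_branch_iff)
  obtain y' where y': "y' \<in> N - {tc}" "reach (N - {tc}) ET s' y'" "v \<in> X y'"
    using uv(2) s(2) by (auto simp: contract_bags_def mem_branch_iff)
  have "\<not> reach (N - {tc}) ET y y'"
  proof
    assume "reach (N - {tc}) ET y y'"
    then have "reach (N - {tc}) ET s s'"
      using reach_trans[OF reach_trans[OF y(2)] reach_sym[OF y'(2)]] by blast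
    then show False
      using tree_neighbour_unique[OF tree] s \<open>s \<noteq> s'\<close> unfolding neighbours_def by blast
  qed
  then show "e \<in> cross_edges E N ET X tc"
    unfolding cross_edges_def using e assms y y' by blast
qed

lemma delta_contract_subset:
  assumes tc: "tc \<in> N" and n: "n \<in> neighbours ET tc" and "E' \<subseteq> E"
  shows "delta E' (contract_bags N ET X S tc n) (contract_bags N ET X S tc tc)
           \<subseteq> delta E (X n) (X tc) \<union> cross_edges E N ET X n"
proof
  have e: "{tc, n} \<in> ET" using n unfolding neighbours_def by simp
  then have ntc: "n \<in> N" "n \<noteq> tc" using tree_edge_nodes[OF tree] by auto
  fix e assume "e \<in> delta E' (contract_bags N ET X S tc n) (contract_bags N ET X S tc tc)"
  then obtain u v where uv: "e \<in> E'" "e = {u, v}" "u \<in> branch N ET X tc n" "v \<in> X tc"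
    using ntc unfolding delta_def contract_bags_def by auto
  then obtain y where y: "y \<in> N - {tc}" "reach (N - {tc}) ET n y" "u \<in> X y"
    unfolding mem_branch_iff by blast
  show "e \<in> delta E (X n) (X tc) \<union> cross_edges E N ET X n"
  proof (cases "y = n")
    case True
    then show ?thesis using uv y \<open>E' \<subseteq> E\<close> unfolding delta_def by blast
  next
    case False
    have "\<not> reach (N - {n}) ET y tc"
      using tree_edge_separates[OF tree e _ y(2)] reach_sym[of "N - {n}" ET y tc] by blast
    then show ?thesis
      using uv y False tc ntc \<open>E' \<subseteq> E\<close> unfolding cross_edges_def by blast
  qed
qed

lemma card_delta_contract_le:
  assumes "tc \<in> N" "n \<in> neighbours ET tc" "E' \<subseteq> E"
    and "finite E" "finite (X n)" "finite (X tc)"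
  shows "card (delta E' (contract_bags N ET X S tc n) (contract_bags N ET X S tc tc))
           \<le> card (X n) * card (X tc) + cross E N ET X n"
proof -
  have "finite (delta E (X n) (X tc))" using \<open>finite E\<close> unfolding delta_def by simp
  then have "card (delta E' (contract_bags N ET X S tc n) (contract_bags N ET X S tc tc))
      \<le> card (delta E (X n) (X tc) \<union> cross_edges E N ET X n)"
    using delta_contract_subset[OF assms(1-3)] finite_cross_edges[OF \<open>finite E\<close>]
    by (intro card_mono) auto
  also have "\<dots> \<le> card (delta E (X n) (X tc)) + card (cross_edges E N ET X n)"
    by (rule card_Un_le)
  also have "\<dots> \<le> card (X n) * card (X tc) + cross E N ET X n"
    using card_delta_le[OF assms(5,6)] by (simp add: cross_eq_card_cross_edges)
  finally show ?thesis .
qed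

lemma cross_contract_le:
  assumes "E' \<subseteq> E" "finite E"
  shows "cross E' (insert tc (neighbours ET tc)) {{tc, l} | l. l \<in> neighbours ET tc}
           (contract_bags N ET X S tc) tc \<le> cross E N ET X tc"
  unfolding cross_eq_card_cross_edges
  by (intro card_mono finite_cross_edges cross_edges_contract_subset assms)

lemma contract_bags_leaf:
  assumes "n \<in> neighbours ET tc"
  shows "contract_bags N ET X S tc n = branch N ET X tc n \<inter> S"
proof -
  have "n \<noteq> tc" using assms neighbours_subset[OF tree] by blast
  then show ?thesis unfolding contract_bags_def by simp
qed

lemma ex_light_node:
  assumes "graph V E" "S \<subseteq> V" "S \<noteq> {}" "card (delta E S (V - S)) \<le> 2 * b"
  shows "\<exists>tc\<in>N. \<forall>s\<in>N - {tc}. \<not> heavy V E S b (branch N ET X tc s)"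
proof -
  have finS: "finite S" using assms(1,2) finite_subset unfolding graph_def by blast
  obtain tc where "tc \<in> N" "\<And>s. s \<in> N - {tc} \<Longrightarrow> \<not> heavy V E S b (branch N ET X tc s)"
  proof (rule ex_node_without_heavy_branch[of "heavy V E S b"])
    fix A B
    show False if "A \<inter> B = {}" "heavy V E S b A" "heavy V E S b B"
      using heavy_disjoint[OF assms that] .
    show "heavy V E S b B" if "A \<subseteq> B" "heavy V E S b A"
      using heavy_mono[OF finS that] .
  qed (rule that)
  then show ?thesis by blast
qed

lemma star_cut_at_light_node:
  assumes finV: "finite V" and finE: "finite E" and "S \<subseteq> V" "\<alpha> < card V" and tc: "tc \<in> N"
    and bag: "\<And>t. t \<in> N \<Longrightarrow> card (X t) \<le> \<alpha>" "\<And>t. t \<in> N \<Longrightarrow> cross E N ET X t \<le> k"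
    and light: "\<And>s. s \<in> N - {tc} \<Longrightarrow> \<not> heavy V E S b (branch N ET X tc s)"
  shows "\<exists>(N' :: 'b set) ET' Y tc L.
           tcd S (induced_edges E S) N' ET' Y
         \<and> is_star N' ET' tc L
         \<and> card (Y tc) \<le> \<alpha> \<and> cross (induced_edges E S) N' ET' Y tc \<le> k
         \<and> (\<forall>t\<in>L. gamma_set V E S (Y t) \<le> b
                 \<and> card (delta (induced_edges E S) (Y t) (Y tc)) \<le> \<alpha>^2 + k)
         \<and> (\<forall>q\<in>L. Y q \<noteq> S)"
proof -
  have "N \<noteq> {tc}"
  proof
    assume "N = {tc}"
    then have "X tc = V" using bags_cover by simp
    then show False using bag(1)[OF tc] \<open>\<alpha> < card V\<close> by simp
  qed
  then have L: "neighbours ET tc \<noteq> {}" "neighbours ET tc \<subseteq> N - {tc}"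
    using neighbours_nonempty[OF tree tc] neighbours_subset[OF tree] by simp_all
  let ?L = "neighbours ET tc" and ?E = "induced_edges E S" and ?Y = "contract_bags N ET X S tc"
  have "?E \<subseteq> E" unfolding induced_edges_def by blast
  have "card (?Y tc) \<le> card (X tc)"
    unfolding contract_bags_def using finite_bag[OF finV tc] by (simp add: card_mono)
  then have "card (?Y tc) \<le> \<alpha>" using bag(1)[OF tc] by linarith
  moreover have "cross ?E (insert tc ?L) {{tc, l} | l. l \<in> ?L} ?Y tc \<le> k"
    using cross_contract_le[OF \<open>?E \<subseteq> E\<close> finE] bag(2)[OF tc] by (rule order_trans)
  moreover have "gamma_set V E S (?Y n) \<le> b \<and> ?Y n \<noteq> S"
    and "card (delta ?E (?Y n) (?Y tc)) \<le> \<alpha>^2 + k" if "n \<in> ?L" for n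
  proof -
    have n: "n \<in> N - {tc}" using that L(2) by blast
    show "gamma_set V E S (?Y n) \<le> b \<and> ?Y n \<noteq> S"
      unfolding contract_bags_leaf[OF that] by (rule not_heavy_Int[OF light[OF n]])
    have "finite (X n)" using finite_bag[OF finV] n by blast
    then have "card (delta ?E (?Y n) (?Y tc)) \<le> card (X n) * card (X tc) + cross E N ET X n"
      by (rule card_delta_contract_le[OF tc that \<open>?E \<subseteq> E\<close> finE _ finite_bag[OF finV tc]])
    also have "\<dots> \<le> \<alpha>^2 + k"
      using mult_le_mono[OF bag(1) bag(1)[OF tc], of n] bag(2)[of n] n
      by (simp add: power2_eq_square)
    finally show "card (delta ?E (?Y n) (?Y tc)) \<le> \<alpha>^2 + k" .
  qed
  moreover have "is_star (insert tc ?L) {{tc, l} | l. l \<in> ?L} tc ?L"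
    using L unfolding is_star_def by blast
  ultimately show ?thesis
    using tcd_contract[OF tc \<open>S \<subseteq> V\<close>] by blast
qed

end

lemma card_le_thickness: "finite N \<Longrightarrow> t \<in> N \<Longrightarrow> card (X t) \<le> thickness N X"
  unfolding thickness_def by simp

lemma cross_le_crossing_number:
  "finite N \<Longrightarrow> t \<in> N \<Longrightarrow> cross E N ET X t \<le> crossing_number E N ET X"
  unfolding crossing_number_def by simp

lemma ex_tcd_thickness_one:
  assumes "finite V" "V \<noteq> {}"
  shows "\<exists>(N :: nat set) ET X. tcd V E N ET X \<and> thickness N X = 1"
proof -
  obtain f where f: "bij_betw f {0..<card V} V"
    using ex_bij_betw_nat_finite[OF assms(1)] by blast
  have "0 < card V" using assms by (simp add: card_gt_0_iff)
  then have N: "insert 0 {1..<card V} = {0..<card V}" by auto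
  have "\<Union> ((\<lambda>i. {f i}) ` {0..<card V}) = f ` {0..<card V}" by blast
  then have "\<Union> ((\<lambda>i. {f i}) ` {0..<card V}) = V" using f by (simp add: bij_betw_def)
  moreover have "is_tree {0..<card V} {{0, l} | l. l \<in> {1..<card V}}"
    using star_tree[of 0 "{1..<card V}"] N by simp
  moreover have "{f s} \<inter> {f s'} = {}" if "s \<in> {0..<card V}" "s' \<in> {0..<card V}" "s \<noteq> s'" for s s'
    using f that unfolding bij_betw_def inj_on_def by blast
  ultimately have "tcd V E {0..<card V} {{0, l} | l. l \<in> {1..<card V}} (\<lambda>i. {f i})"
    unfolding tcd_def by blast
  moreover have "(\<lambda>t. card {f t}) ` {0..<card V} = {1}" using N by auto
  then have "thickness {0..<card V} (\<lambda>i. {f i}) = 1" unfolding thickness_def by simp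
  ultimately show ?thesis by blast
qed

text \<open>Since Inf {} = 0 on nat, an upper bound on ecrw yields a decomposition only because one
  of thickness 1 always exists.\<close>
lemma ecrw_le_obtains_decomposition:
  assumes "finite V" "V \<noteq> {}" "0 < \<alpha>" "ecrw \<alpha> V E \<le> k"
  obtains N :: "nat set" and ET X where "tcd V E N ET X"
    "\<And>t. t \<in> N \<Longrightarrow> card (X t) \<le> \<alpha>" "\<And>t. t \<in> N \<Longrightarrow> cross E N ET X t \<le> k"
proof -
  let ?C = "{c. \<exists>(N :: nat set) ET X. tcd V E N ET X \<and> thickness N X \<le> \<alpha>
                \<and> crossing_number E N ET X = c}"
  obtain N :: "nat set" and ET X where "tcd V E N ET X" "thickness N X = 1"
    using ex_tcd_thickness_one[OF assms(1,2), of E] by blast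
  then have "crossing_number E N ET X \<in> ?C" using assms(3) by (intro CollectI exI conjI) auto
  then have "Inf ?C \<in> ?C" by (intro Inf_nat_def1) blast
  then obtain N :: "nat set" and ET X where dec: "tcd V E N ET X" "thickness N X \<le> \<alpha>"
    "crossing_number E N ET X \<le> k"
    using assms(4) unfolding ecrw_def by auto
  then have "finite N" unfolding tcd_def is_tree_def by simp
  then show ?thesis
    using that[OF dec(1)] order_trans[OF card_le_thickness dec(2)]
      order_trans[OF cross_le_crossing_number dec(3)] by blast
qed

theorem lemma4p1:
  fixes V :: "'a set" and E :: "'a set set" and S :: "'a set" and \<alpha> k :: nat
  assumes "graph V E"
    and "\<alpha> > 0" and "k > 0"
    and "S \<subseteq> V" and "card S \<ge> \<alpha> + 1"
    and "card (delta E S (V - S)) \<le> 2 * \<alpha>^2 + 4 * k"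
    and "ecrw \<alpha> V E \<le> k"
  shows "\<exists>(N :: nat set) ET X tc L.
           tcd S (induced_edges E S) N ET X
         \<and> is_star N ET tc L
         \<and> card (X tc) \<le> \<alpha> \<and> cross (induced_edges E S) N ET X tc \<le> k
         \<and> (\<forall>t\<in>L. gamma_set V E S (X t) \<le> \<alpha>^2 + 2 * k
                 \<and> card (delta (induced_edges E S) (X t) (X tc)) \<le> \<alpha>^2 + k)
         \<and> (\<forall>q\<in>L. X q \<noteq> S)"
proof -
  have finV: "finite V" using assms(1) unfolding graph_def by simp
  have large: "\<alpha> < card V" using card_mono[OF finV assms(4)] assms(5) by simp
  then have "V \<noteq> {}" by auto
  then obtain N :: "nat set" and ET X where "tcd V E N ET X"
    and bag: "\<And>t. t \<in> N \<Longrightarrow> card (X t) \<le> \<alpha>" "\<And>t. t \<in> N \<Longrightarrow> cross E N ET X t \<le> k"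
    using ecrw_le_obtains_decomposition[OF finV _ assms(2,7)] by blast
  then interpret T: tree_cut_decomposition V E N ET X by unfold_locales
  have "S \<noteq> {}" "card (delta E S (V - S)) \<le> 2 * (\<alpha>^2 + 2 * k)" using assms(5,6) by auto
  then obtain tc where "tc \<in> N" "\<forall>s\<in>N - {tc}. \<not> heavy V E S (\<alpha>^2 + 2 * k) (branch N ET X tc s)"
    using T.ex_light_node[OF assms(1,4)] by blast
  then show ?thesis
    using T.star_cut_at_light_node[OF finV graph_finite_edges[OF assms(1)] assms(4) large _ bag]
    by blast
qed

end
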